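(* Let $n\ge2$ and $Q\in SU_n$ with eigenvalues $\mu_1,\dots,\mu_n$ (with multiplicity), and let $\zeta(Q):=\frac1{2\pi}\sum_{j=1}^n\arg(\mu_j)\in\mathbb{Z}$. Let $W_Q:=\{(k_1,\dots,k_n)\in\mathbb{Z}^n:\sum_{j=1}^nk_j=-\zeta(Q)\}$ and $Z_Q:=\{\underline{k}=(k_1,\dots,k_n)\in W_Q:\max_jk_j-\min_jk_j\le1\}$. If $\zeta(Q)\ge0$, then every $\underline{k}\in Z_Q$ has exactly $\zeta(Q)$ entries equal to $-1$ and all remaining entries equal to $0$. In particular, if $\zeta(Q)=0$, then $Z_Q=\{(0,\dots,0)\}$.
   Context: $SU_n$ is the special unitary group and $\arg(z)\in(-\pi,\pi]$ the principal argument. *)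

theory Defs
  imports "Jordan_Normal_Form.Schur_Decomposition"
begin

definition SU :: "nat \<Rightarrow> complex mat set" where
  "SU n = {Q. Q \<in> carrier_mat n n \<and> Q * mat_adjoint Q = 1\<^sub>m n
               \<and> mat_adjoint Q * Q = 1\<^sub>m n \<and> det Q = 1}"

definition eigenvalues_with_mult :: "complex mat \<Rightarrow> complex list \<Rightarrow> bool" where
  "eigenvalues_with_mult Q mus \<longleftrightarrow> char_poly Q = (\<Prod>\<mu>\<leftarrow>mus. [:- \<mu>, 1:])"

definition zeta :: "complex list \<Rightarrow> real" where
  "zeta mus = (\<Sum>\<mu>\<leftarrow>mus. Arg \<mu>) / (2 * pi)"

definition W_set :: "nat \<Rightarrow> real \<Rightarrow> int list set" where
  "W_set n z = {ks. length ks = n \<and> real_of_int (sum_list ks) = - z}"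

definition Z_set :: "nat \<Rightarrow> real \<Rightarrow> int list set" where
  "Z_set n z = {ks \<in> W_set n z. Max (set ks) - Min (set ks) \<le> 1}"

end

theory Submission
  imports Defs
begin

text \<open>Every principal argument is at most \<open>\<pi>\<close>, so \<open>0 \<le> \<zeta>(Q) \<le> n/2 < n\<close>; hence a vector
  \<open>k\<close> of \<open>Z\<^sub>Q\<close> has coordinate sum in \<open>(-n, 0]\<close>. Its entries lie in \<open>{m, m+1}\<close> for
  \<open>m = min k\<close>: if \<open>m \<ge> 0\<close> the sum forces \<open>k = 0\<close>, if \<open>m \<le> -2\<close> the sum is at most \<open>-n\<close>,
  so \<open>m = -1\<close> and the entries are \<open>-1\<close> and \<open>0\<close>, the number of \<open>-1\<close>'s being \<open>-\<Sum>k = \<zeta>(Q)\<close>.\<close>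

lemma length_eigenvalues_with_mult:
  assumes "Q \<in> carrier_mat n n" and "eigenvalues_with_mult Q mus"
  shows "length mus = n"
  using degree_monic_char_poly[OF assms(1)] degree_linear_factors[of uminus mus] assms(2)
  unfolding eigenvalues_with_mult_def by simp

lemma zeta_le_half_length: "zeta mus \<le> length mus / 2"
proof -
  have "(\<Sum>\<mu>\<leftarrow>mus. Arg \<mu>) \<le> (\<Sum>\<mu>\<leftarrow>mus. pi)"
    by (intro sum_list_mono) (simp add: Arg_bounded)
  also have "\<dots> = length mus * pi"
    by (simp add: sum_list_triv)
  finally show ?thesis
    unfolding zeta_def by (simp add: field_simps)
qed

lemma spread_le_1_bounds:
  fixes ks :: "int list"
  assumes "Max (set ks) - Min (set ks) \<le> 1" and "k \<in> set ks"
  shows "Min (set ks) \<le> k" and "k \<le> Min (set ks) + 1"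
proof -
  have "Min (set ks) \<le> k" "k \<le> Max (set ks)"
    using assms(2) by simp_all
  then show "Min (set ks) \<le> k" and "k \<le> Min (set ks) + 1"
    using assms(1) by linarith+
qed

lemma sum_list_minus1_0_entries:
  fixes ks :: "int list"
  assumes "\<forall>k\<in>set ks. k = -1 \<or> k = 0"
  shows "sum_list ks = - int (length (filter (\<lambda>k. k = -1) ks))"
  using assms by (induction ks) auto

lemma spread_le_1_entries_minus1_0:
  fixes ks :: "int list"
  assumes spread: "Max (set ks) - Min (set ks) \<le> 1"
    and lower: "- int (length ks) < sum_list ks" and upper: "sum_list ks \<le> 0"
  shows "\<forall>k\<in>set ks. k = -1 \<or> k = 0"
proof (cases "Min (set ks) \<ge> 0")
  case True
  then have nonneg: "\<And>k. k \<in> set ks \<Longrightarrow> 0 \<le> k"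
    using spread_le_1_bounds(1)[OF spread] by (meson order_trans)
  have "0 \<le> sum_list ks"
    using nonneg by (rule sum_list_nonneg)
  with upper have "sum_list ks = 0"
    by simp
  then show ?thesis
    using sum_list_nonneg_eq_0_iff[OF nonneg] by blast
next
  case False
  have "Min (set ks) = -1"
  proof (rule ccontr)
    assume "Min (set ks) \<noteq> -1"
    with False have "\<forall>k\<in>set ks. k \<le> -1"
      using spread_le_1_bounds(2)[OF spread] by force
    then have "sum_list ks \<le> (\<Sum>k\<leftarrow>ks. -1)"
      using sum_list_mono[of ks "\<lambda>k. k" "\<lambda>_. -1"] by simp
    with lower show False
      by (simp add: sum_list_triv)
  qed
  then show ?thesis
    using spread_le_1_bounds[OF spread] by force
qed

lemma Z_set_entries:
  assumes "ks \<in> Z_set n z" and "0 \<le> z" and "z < n"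
  shows "real (length (filter (\<lambda>k. k = -1) ks)) = z \<and> (\<forall>k \<in> set ks. k = -1 \<or> k = 0)"
proof -
  have ks: "length ks = n" "real_of_int (sum_list ks) = - z" "Max (set ks) - Min (set ks) \<le> 1"
    using assms(1) unfolding Z_set_def W_set_def by auto
  then have entries: "\<forall>k\<in>set ks. k = -1 \<or> k = 0"
    using spread_le_1_entries_minus1_0[of ks] assms(2,3) by simp
  show ?thesis
    using sum_list_minus1_0_entries[OF entries] ks(2) entries by simp
qed

lemma Z_set_zero:
  assumes "n > 0"
  shows "Z_set n 0 = {replicate n 0}"
proof
  show "Z_set n 0 \<subseteq> {replicate n 0}"
  proof
    fix ks assume ks: "ks \<in> Z_set n 0"
    then have "\<forall>k \<in> set ks. k = 0"
      using Z_set_entries[of ks n 0] assms by (force simp: filter_empty_conv)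
    moreover have "length ks = n"
      using ks unfolding Z_set_def W_set_def by simp
    ultimately show "ks \<in> {replicate n 0}"
      using replicate_length_same[of ks 0] by simp
  qed
  show "{replicate n 0} \<subseteq> Z_set n 0"
    using assms unfolding Z_set_def W_set_def by (simp add: sum_list_replicate)
qed

theorem lemma2p7:
  fixes n :: nat and Q :: "complex mat" and mus :: "complex list"
  assumes "n \<ge> 2"
    and "Q \<in> SU n"
    and "eigenvalues_with_mult Q mus"
    and "zeta mus \<ge> 0"
  shows "(\<forall>ks \<in> Z_set n (zeta mus).
            real (length (filter (\<lambda>k. k = -1) ks)) = zeta mus
          \<and> (\<forall>k \<in> set ks. k = -1 \<or> k = 0))
       \<and> (zeta mus = 0 \<longrightarrow> Z_set n (zeta mus) = {replicate n 0})"
proof -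
  have "length mus = n"
    using assms(2,3) length_eigenvalues_with_mult unfolding SU_def by blast
  then have "zeta mus < n"
    using zeta_le_half_length[of mus] assms(1) by simp
  then show ?thesis
    using Z_set_entries Z_set_zero assms(1,4) by simp
qed

end
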